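(* For $\sigma>0$ and $k\ge 0$, define the price-to-delta ratio $$C_{\mathcal D}(\sigma;k)=\frac{C_{\mathrm{BS}}(\sigma;k)}{\Phi(d_1(\sigma;k))}=1-e^k\frac{\Phi(d_2(\sigma;k))}{\Phi(d_1(\sigma;k))}=1-\frac{R(-d_2(\sigma;k))}{R(-d_1(\sigma;k))}.$$ Then $C_{\mathcal D}(\sigma;k)$ is monotonically increasing in $\sigma>0$ for each fixed $k\ge0$, and monotonically decreasing in $k\ge 0$ for each fixed $\sigma>0$.
   Context: Let $\Phi$ and $\phi$ denote the standard normal distribution function and density, and let $R(x)=\Phi(-x)/\phi(x)$ be the Mills ratio. For $\sigma>0$, $k\ge 0$ put $d_1(\sigma;k)=-k/\sigma+\sigma/2$, $d_2(\sigma;k)=-k/\sigma-\sigma/2$, and $C_{\mathrm{BS}}(\sigma;k)=\Phi(d_1(\sigma;k))-e^k\,\Phi(d_2(\sigma;k))$. *)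

theory Defs
  imports "HOL-Probability.Probability"
begin

definition Phi :: "real \<Rightarrow> real" where
  "Phi x = (LBINT t:{..x}. std_normal_density t)"

definition phi :: "real \<Rightarrow> real" where
  "phi x = std_normal_density x"

definition mills :: "real \<Rightarrow> real" where
  "mills x = Phi (- x) / phi x"

definition d1 :: "real \<Rightarrow> real \<Rightarrow> real" where
  "d1 \<sigma> k = - k / \<sigma> + \<sigma> / 2"

definition d2 :: "real \<Rightarrow> real \<Rightarrow> real" where
  "d2 \<sigma> k = - k / \<sigma> - \<sigma> / 2"

definition C_BS :: "real \<Rightarrow> real \<Rightarrow> real" where
  "C_BS \<sigma> k = Phi (d1 \<sigma> k) - exp k * Phi (d2 \<sigma> k)"

definition C_D :: "real \<Rightarrow> real \<Rightarrow> real" where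
  "C_D \<sigma> k = C_BS \<sigma> k / Phi (d1 \<sigma> k)"

end

theory Submission
  imports Defs
begin

text \<open>
  Write \<open>r x = \<Phi>(x) / \<phi>(x) = R(-x)\<close>. As \<open>\<phi>(d\<^sub>1) = e\<^sup>k \<phi>(d\<^sub>2)\<close> and \<open>d\<^sub>1 = d\<^sub>2 + \<sigma>\<close>,
  the price-to-delta ratio is \<open>1 - r(d\<^sub>2) / r(d\<^sub>2 + \<sigma>)\<close>, and two properties of \<open>r\<close> suffice.
  First, \<open>r' = 1 + x r \<ge> 0\<close>, which is the Mills inequality \<open>-x \<Phi>(x) \<le> \<phi>(x)\<close>. Second,
  \<open>r\<close> is log-convex: \<open>(ln r)' = x + 1/r\<close> is increasing because \<open>r\<^sup>2 - x r - 1 \<ge> 0\<close>, and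
  this holds since \<open>(r\<^sup>2 - x r - 1) \<phi>\<close> has derivative \<open>\<phi> r r' \<ge> 0\<close> and vanishes at \<open>-\<infinity>\<close>.
  Log-convexity makes \<open>r(t + \<sigma>) / r(t)\<close> increasing in \<open>t\<close>, and \<open>d\<^sub>2\<close> decreases in \<open>k\<close>.
  In \<open>\<sigma>\<close>, the point \<open>d\<^sub>1\<close> increases (as \<open>k \<ge> 0\<close>); if \<open>d\<^sub>2\<close> decreases, monotonicity of
  \<open>r\<close> alone controls the quotient, otherwise log-convexity does.
\<close>

lemma set_integrable_phi: "A \<in> sets lborel \<Longrightarrow> set_integrable lborel A phi"
  unfolding set_integrable_def phi_def
  by (intro integrable_mult_indicator) auto

lemma continuous_on_phi: "continuous_on A phi"
  unfolding phi_def std_normal_density_def by (intro continuous_intros) auto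

lemma phi_pos: "0 < phi x"
  by (simp add: phi_def normal_density_pos)

lemma phi_has_real_derivative: "(phi has_real_derivative - x * phi x) (at x)"
  unfolding phi_def std_normal_density_def
  by (auto intro!: derivative_eq_intros simp: field_simps power2_eq_square)

lemma phi_tendsto_at_bot: "(phi \<longlongrightarrow> 0) at_bot"
  unfolding phi_def std_normal_density_def by real_asymp

lemma Phi_eq_interval_integral: "Phi x = (LBINT t=-\<infinity>..ereal x. phi t)"
proof -
  have "(LBINT t=-\<infinity>..ereal x. phi t) = (LBINT t:{..<x}. phi t)"
    by (simp add: interval_lebesgue_integral_def)
  also have "\<dots> = (LBINT t:{..x}. phi t)"
    unfolding set_lebesgue_integral_def using AE_lborel_singleton[of x]
    by (intro integral_cong_AE) (auto elim!: eventually_mono split: split_indicator simp: phi_def)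
  finally show ?thesis by (simp add: Phi_def phi_def)
qed

lemma Phi_has_real_derivative: "(Phi has_real_derivative phi x) (at x)"
proof -
  define c where "c = x - 1"
  have split: "Phi u = (LBINT t=-\<infinity>..ereal c. phi t) + (LBINT t=ereal c..ereal u. phi t)" for u
    unfolding Phi_eq_interval_integral
    by (rule interval_integral_sum[symmetric])
       (auto simp: interval_lebesgue_integrable_def intro!: set_integrable_phi)
  have "((\<lambda>u. LBINT t=c..u. phi t) has_vector_derivative phi x) (at x within {x-1..x+1})"
    by (rule interval_integral_FTC2) (auto simp: c_def intro: continuous_on_phi)
  then have "((\<lambda>u. LBINT t=c..u. phi t) has_vector_derivative phi x) (at x within {x-1<..<x+1})"
    by (rule has_vector_derivative_within_subset) auto
  then have "((\<lambda>u. LBINT t=c..u. phi t) has_vector_derivative phi x) (at x)"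
    by (subst (asm) has_vector_derivative_within_open) auto
  then show ?thesis
    unfolding split[abs_def]
    by (auto intro!: derivative_eq_intros simp: has_real_derivative_iff_has_vector_derivative)
qed

lemma Phi_pos: "0 < Phi x"
proof -
  have "0 \<le> Phi (x - 1)"
    unfolding Phi_def set_lebesgue_integral_def
    by (intro Bochner_Integration.integral_nonneg) (auto simp: indicator_def)
  also have "Phi (x - 1) < Phi x"
    by (rule DERIV_pos_imp_increasing) (auto intro!: Phi_has_real_derivative phi_pos)
  finally show ?thesis .
qed

text \<open>The Mills inequality, from \<open>\<phi> \<le> (t/x) \<phi>(t)\<close> on \<open>t < x < 0\<close> and \<open>\<phi>' = -t \<phi>\<close>.\<close>

lemma neg_mult_Phi_le_phi:
  assumes "x < 0"
  shows "- x * Phi x \<le> phi x"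
proof -
  let ?f = "\<lambda>t. t / x * phi t" and ?F = "\<lambda>t. - phi t / x"
  have F: "(?F has_real_derivative ?f t) (at t)" for t
    using phi_has_real_derivative[of t] assms by (auto intro!: derivative_eq_intros simp: field_simps)
  have F_bot: "((?F \<circ> real_of_ereal) \<longlongrightarrow> 0) (at_right (-\<infinity>))"
    unfolding ereal_tendsto_simps1
    using tendsto_divide[OF tendsto_minus[OF phi_tendsto_at_bot] tendsto_const[of x]] assms by simp
  have F_x: "((?F \<circ> real_of_ereal) \<longlongrightarrow> ?F x) (at_left (ereal x))"
    unfolding ereal_tendsto_simps1 using assms
    by (intro tendsto_intros continuous_on_tendsto_compose[OF continuous_on_phi[of UNIV]])
       (auto intro: filterlim_ident tendsto_ident_at)
  have f_nonneg: "AE t in lborel. -\<infinity> < ereal t \<longrightarrow> ereal t < ereal x \<longrightarrow> 0 \<le> ?f t"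
    using assms by (intro AE_I2) (auto intro!: divide_nonpos_neg mult_nonpos_nonneg less_imp_le[OF phi_pos])
  have f_cont: "isCont ?f t" for t
    using continuous_on_phi[of UNIV] assms
    by (auto intro!: continuous_intros simp: continuous_on_eq_continuous_at)
  have f_int: "set_integrable lborel {..<x} ?f" and f_integral: "(LBINT t:{..<x}. ?f t) = ?F x"
    using interval_integral_FTC_nonneg[OF _ F f_cont f_nonneg F_bot F_x]
    by (auto simp: interval_lebesgue_integral_def)
  have phi_le_f: "phi t \<le> ?f t" if "t < x" for t
    using mult_right_mono[of 1 "t / x" "phi t"] that assms phi_pos[of t] by (simp add: le_divide_eq)
  have "Phi x = (LBINT t:{..<x}. phi t)"
    by (simp add: Phi_eq_interval_integral interval_lebesgue_integral_def)
  also have "\<dots> \<le> (LBINT t:{..<x}. ?f t)"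
    using f_int phi_le_f by (intro set_integral_mono set_integrable_phi) auto
  also have "\<dots> = - phi x / x"
    by (rule f_integral)
  finally show ?thesis
    using assms by (simp add: field_simps)
qed

text \<open>\<open>Phi_ratio x = mills (-x)\<close>, by the symmetry of \<open>\<phi>\<close>.\<close>

definition Phi_ratio :: "real \<Rightarrow> real" where
  "Phi_ratio x = Phi x / phi x"

lemma Phi_ratio_pos: "0 < Phi_ratio x"
  using Phi_pos phi_pos by (simp add: Phi_ratio_def)

lemma Phi_ratio_has_real_derivative: "(Phi_ratio has_real_derivative 1 + x * Phi_ratio x) (at x)"
  unfolding Phi_ratio_def[abs_def]
proof (rule DERIV_cong[OF DERIV_divide[OF Phi_has_real_derivative phi_has_real_derivative]])
  show "phi x \<noteq> 0" and "(phi x * phi x - Phi x * (- x * phi x)) / (phi x * phi x) = 1 + x * (Phi x / phi x)"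
    using phi_pos[of x] by (simp_all add: field_simps)
qed

lemma Phi_ratio_deriv_nonneg: "0 \<le> 1 + x * Phi_ratio x"
proof (cases "x < 0")
  case True
  with neg_mult_Phi_le_phi[OF True] phi_pos[of x] show ?thesis
    by (simp add: Phi_ratio_def field_simps)
next
  case False
  with Phi_ratio_pos[of x] show ?thesis by simp
qed

lemma mono_Phi_ratio: "mono Phi_ratio"
  by (intro monoI deriv_nonneg_imp_mono[OF Phi_ratio_has_real_derivative Phi_ratio_deriv_nonneg])

lemma Phi_ratio_le_one:
  assumes "x \<le> -1"
  shows "Phi_ratio x \<le> 1"
proof -
  have "Phi_ratio x \<le> - x * Phi_ratio x"
    using mult_right_mono[of 1 "-x" "Phi_ratio x"] assms Phi_ratio_pos[of x] by simp
  also have "\<dots> \<le> 1"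
    using Phi_ratio_deriv_nonneg[of x] by simp
  finally show ?thesis .
qed

lemma log_convexity_defect_tendsto_at_bot:
  "((\<lambda>x. (Phi_ratio x ^ 2 - x * Phi_ratio x - 1) * phi x) \<longlongrightarrow> 0) at_bot"
proof (rule Lim_null_comparison)
  show "((\<lambda>x. 3 * phi x) \<longlongrightarrow> 0) at_bot"
    using tendsto_mult_right_zero[OF phi_tendsto_at_bot] by simp
  show "\<forall>\<^sub>F x in at_bot. norm ((Phi_ratio x ^ 2 - x * Phi_ratio x - 1) * phi x) \<le> 3 * phi x"
    unfolding eventually_at_bot_linorder
  proof (intro exI[of _ "-1"] allI impI)
    fix x :: real
    assume x: "x \<le> -1"
    have "Phi_ratio x ^ 2 \<le> 1"
      using Phi_ratio_le_one[OF x] Phi_ratio_pos[of x] by (simp add: power_le_one)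
    moreover have "0 \<le> - x * Phi_ratio x"
      using x Phi_ratio_pos[of x] by (intro mult_nonneg_nonneg) auto
    ultimately have "\<bar>Phi_ratio x ^ 2 - x * Phi_ratio x - 1\<bar> \<le> 3"
      using Phi_ratio_deriv_nonneg[of x] zero_le_power2[of "Phi_ratio x"]
      unfolding abs_le_iff by linarith
    then show "norm ((Phi_ratio x ^ 2 - x * Phi_ratio x - 1) * phi x) \<le> 3 * phi x"
      using phi_pos[of x] by (simp add: abs_mult mult_right_mono)
  qed
qed

lemma log_convexity_defect_nonneg: "0 \<le> Phi_ratio x ^ 2 - x * Phi_ratio x - 1"
proof -
  let ?r = Phi_ratio
  let ?Q = "\<lambda>x. (?r x ^ 2 - x * ?r x - 1) * phi x"
  have Q': "(?Q has_real_derivative phi t * ?r t * (1 + t * ?r t)) (at t)" for t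
    by (auto intro!: derivative_eq_intros Phi_ratio_has_real_derivative phi_has_real_derivative
             simp: algebra_simps power2_eq_square)
  have "0 \<le> ?Q x"
  proof (rule tendsto_upperbound[OF log_convexity_defect_tendsto_at_bot])
    show "\<forall>\<^sub>F y in at_bot. ?Q y \<le> ?Q x"
      unfolding eventually_at_bot_linorder
      by (intro exI[of _ x] allI impI deriv_nonneg_imp_mono[OF Q'])
         (auto intro!: mult_nonneg_nonneg Phi_ratio_deriv_nonneg
                       less_imp_le[OF phi_pos] less_imp_le[OF Phi_ratio_pos])
  qed simp
  then show ?thesis
    using phi_pos[of x] by (simp add: zero_le_mult_iff)
qed

lemma mono_log_deriv_Phi_ratio: "mono (\<lambda>x. x + 1 / Phi_ratio x)"
proof -
  have deriv: "((\<lambda>x. x + 1 / Phi_ratio x) has_real_derivative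
                 (Phi_ratio x ^ 2 - x * Phi_ratio x - 1) / Phi_ratio x ^ 2) (at x)" for x
  proof (rule DERIV_cong)
    show "((\<lambda>x. x + 1 / Phi_ratio x) has_real_derivative
            1 + (0 * Phi_ratio x - 1 * (1 + x * Phi_ratio x)) / (Phi_ratio x * Phi_ratio x)) (at x)"
      using Phi_ratio_pos[of x]
      by (intro DERIV_add DERIV_ident DERIV_divide DERIV_const Phi_ratio_has_real_derivative) auto
    show "1 + (0 * Phi_ratio x - 1 * (1 + x * Phi_ratio x)) / (Phi_ratio x * Phi_ratio x)
            = (Phi_ratio x ^ 2 - x * Phi_ratio x - 1) / Phi_ratio x ^ 2"
      using Phi_ratio_pos[of x] by (simp add: field_simps power2_eq_square)
  qed
  show ?thesis
    by (intro monoI deriv_nonneg_imp_mono[OF deriv]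
          divide_nonneg_nonneg log_convexity_defect_nonneg zero_le_power2)
qed

lemma shift_quotient_mono_if_log_deriv_mono:
  fixes f L :: "real \<Rightarrow> real"
  assumes f': "\<And>x. (f has_real_derivative f x * L x) (at x)"
    and pos: "\<And>x. 0 < f x" and "mono L" and "0 \<le> s" and "y \<le> x"
  shows "f (y + s) / f y \<le> f (x + s) / f x"
proof (rule deriv_nonneg_imp_mono[OF _ _ \<open>y \<le> x\<close>])
  fix t
  have shift': "((\<lambda>t. t + s) has_real_derivative 1) (at t)"
    by (auto intro!: derivative_eq_intros)
  have "f t \<noteq> 0"
    using pos[of t] by simp
  from DERIV_divide[OF DERIV_chain2[OF f' shift'] f' this]
  show "((\<lambda>t. f (t + s) / f t) has_real_derivative
          f (t + s) / f t * (L (t + s) - L t)) (at t)"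
    by (rule DERIV_cong) (use pos[of t] in \<open>simp add: field_simps\<close>)
  show "0 \<le> f (t + s) / f t * (L (t + s) - L t)"
    using pos[of t] pos[of "t + s"] monoD[OF \<open>mono L\<close>, of t "t + s"] \<open>0 \<le> s\<close> by simp
qed

lemma Phi_ratio_shift_quotient_mono:
  "0 \<le> s \<Longrightarrow> y \<le> x \<Longrightarrow> Phi_ratio (y + s) / Phi_ratio y \<le> Phi_ratio (x + s) / Phi_ratio x"
proof (rule shift_quotient_mono_if_log_deriv_mono[OF _ Phi_ratio_pos mono_log_deriv_Phi_ratio])
  fix x
  show "(Phi_ratio has_real_derivative Phi_ratio x * (x + 1 / Phi_ratio x)) (at x)"
    using Phi_ratio_has_real_derivative[of x] Phi_ratio_pos[of x] by (simp add: algebra_simps)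
qed

lemma d1_eq_d2_add: "d1 \<sigma> k = d2 \<sigma> k + \<sigma>"
  by (simp add: d1_def d2_def)

lemma exp_mult_phi_d2:
  assumes "\<sigma> \<noteq> 0"
  shows "exp k * phi (d2 \<sigma> k) = phi (d1 \<sigma> k)"
proof -
  have "k + - (d2 \<sigma> k)\<^sup>2 / 2 = - (d1 \<sigma> k)\<^sup>2 / 2"
    using assms by (simp add: d1_def d2_def field_simps power2_eq_square)
  then have "exp k * exp (- (d2 \<sigma> k)\<^sup>2 / 2) = exp (- (d1 \<sigma> k)\<^sup>2 / 2)"
    by (simp only: mult_exp_exp)
  then show ?thesis
    by (simp add: phi_def std_normal_density_def mult.left_commute)
qed

lemma C_D_eq_Phi_ratio:
  assumes "\<sigma> \<noteq> 0"
  shows "C_D \<sigma> k = 1 - Phi_ratio (d2 \<sigma> k) / Phi_ratio (d2 \<sigma> k + \<sigma>)"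
proof -
  have Phi: "Phi x = Phi_ratio x * phi x" for x
    using phi_pos[of x] by (simp add: Phi_ratio_def)
  show ?thesis
    unfolding C_D_def C_BS_def Phi mult.left_commute[of "exp k"] exp_mult_phi_d2[OF assms]
    using Phi_ratio_pos[of "d1 \<sigma> k"] phi_pos[of "d1 \<sigma> k"]
    by (simp add: d1_eq_d2_add field_simps)
qed

lemma C_D_le_if_Phi_ratio_quotient_le:
  assumes "\<sigma> \<noteq> 0" "\<sigma>' \<noteq> 0"
    and "Phi_ratio (d2 \<sigma> k + \<sigma>) / Phi_ratio (d2 \<sigma> k)
           \<le> Phi_ratio (d2 \<sigma>' k' + \<sigma>') / Phi_ratio (d2 \<sigma>' k')"
  shows "C_D \<sigma> k \<le> C_D \<sigma>' k'"
proof -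
  have "inverse (Phi_ratio (d2 \<sigma>' k' + \<sigma>') / Phi_ratio (d2 \<sigma>' k'))
          \<le> inverse (Phi_ratio (d2 \<sigma> k + \<sigma>) / Phi_ratio (d2 \<sigma> k))"
    using assms(3) Phi_ratio_pos by (intro le_imp_inverse_le) auto
  then show ?thesis
    using assms(1,2) by (simp add: C_D_eq_Phi_ratio)
qed

lemma mono_C_D_volatility:
  assumes "0 \<le> k"
  shows "mono_on {0<..} (\<lambda>\<sigma>. C_D \<sigma> k)"
proof (rule mono_onI)
  fix \<sigma> \<sigma>' :: real
  assume \<sigma>: "\<sigma> \<in> {0<..}" "\<sigma>' \<in> {0<..}" "\<sigma> \<le> \<sigma>'"
  let ?r = Phi_ratio
  define a a' where "a = d2 \<sigma> k" and "a' = d2 \<sigma>' k"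
  have "k / \<sigma>' \<le> k / \<sigma>"
    using \<sigma> assms by (intro divide_left_mono) auto
  then have "d1 \<sigma> k \<le> d1 \<sigma>' k"
    using \<sigma> by (simp add: d1_def)
  then have d1_le: "a + \<sigma> \<le> a' + \<sigma>'"
    by (simp add: a_def a'_def d1_eq_d2_add)
  have pos: "0 < ?r a" "0 < ?r a'"
    by (simp_all add: Phi_ratio_pos)
  have "?r (a + \<sigma>) / ?r a \<le> ?r (a' + \<sigma>') / ?r a'"
  proof (cases "a' \<le> a")
    case True
    have "?r (a + \<sigma>) / ?r a \<le> ?r (a' + \<sigma>') / ?r a"
      using monoD[OF mono_Phi_ratio d1_le] pos by (simp add: divide_right_mono)
    also have "\<dots> \<le> ?r (a' + \<sigma>') / ?r a'"
      using monoD[OF mono_Phi_ratio True] pos Phi_ratio_pos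
      by (intro divide_left_mono) (auto intro: less_imp_le)
    finally show ?thesis .
  next
    case False
    have "?r (a + \<sigma>) / ?r a \<le> ?r (a' + \<sigma>) / ?r a'"
      using False \<sigma> by (intro Phi_ratio_shift_quotient_mono) auto
    also have "\<dots> \<le> ?r (a' + \<sigma>') / ?r a'"
      using monoD[OF mono_Phi_ratio, of "a' + \<sigma>" "a' + \<sigma>'"] \<sigma> pos
      by (simp add: divide_right_mono)
    finally show ?thesis .
  qed
  then show "C_D \<sigma> k \<le> C_D \<sigma>' k"
    using \<sigma> by (intro C_D_le_if_Phi_ratio_quotient_le) (auto simp: a_def a'_def)
qed

lemma antimono_C_D_strike:
  assumes "0 < \<sigma>"
  shows "antimono (\<lambda>k. C_D \<sigma> k)"
proof (rule antimonoI)
  fix k k' :: real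
  assume "k \<le> k'"
  then have "d2 \<sigma> k' \<le> d2 \<sigma> k"
    using assms by (simp add: d2_def divide_right_mono)
  then show "C_D \<sigma> k' \<le> C_D \<sigma> k"
    using assms by (intro C_D_le_if_Phi_ratio_quotient_le Phi_ratio_shift_quotient_mono) auto
qed

theorem lemma1:
  shows "(\<forall>k\<ge>0. mono_on {0<..} (\<lambda>\<sigma>. C_D \<sigma> k))
       \<and> (\<forall>\<sigma>>0. antimono_on {0..} (\<lambda>k. C_D \<sigma> k))"
proof (intro conjI allI impI)
  fix k :: real
  assume "0 \<le> k"
  then show "mono_on {0<..} (\<lambda>\<sigma>. C_D \<sigma> k)"
    by (rule mono_C_D_volatility)
next
  fix \<sigma> :: real
  assume "0 < \<sigma>"
  then show "antimono_on {0..} (\<lambda>k. C_D \<sigma> k)"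
    by (rule monotone_on_subset[OF antimono_C_D_strike]) simp
qed

end
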